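(* Let $F=F_+\tilde{*}F_-$ be a twisted plumbing along $U$ with defect $m\ge1$, with pinch points $x=\{x_1,\dots,x_m\}$. Suppose every component $U_0$ of $(U\cap Q)\setminus x$, having $k$ points of $x$ on its boundary, satisfies: $|\partial U_0\cap L|\equiv k\pmod 2$; $|\partial U_0\cap L|\ge 3$ if $k=1$; and $|\partial U_0\cap L|\ge 2$ if $k=2$. Then $|\partial U\cap L|\ge 2m+4$.
   Context: Let $F$ be a spanning surface for a link $L\subset S^3$ (compact surface, orientable or not, no closed components, $\partial F=L$). Twisted plumbing: let $Q\subset S^3$ be a 2-sphere with regular neighborhood $\nu Q\cong Q\times[-1,1]$, $Q=Q\times\{0\}$, projection $\pi_Q:\nu Q\to Q$. Let $H_\pm$ be the components of $S^3\setminus\nu Q$, $B_\pm=H_\pm\cup\nu Q$, $F_\pm=F\cap B_\pm$, and $U=F\cap\nu Q$. Isotope $F$ near $U$ so that for each $y\in Q$ the fiber $\pi_Q^{-1}(y)$ either meets $F$ transversely or meets $F$ in a properly embedded arc of $F$, minimizing the number $m$ of points $x_1,\dots,x_m\in Q$ over which the fiber is not transverse to $U$; then, fixing $F\cap\pi_Q^{-1}(x)$, isotope $F$ near $U$ so that $U\cap Q$ is a pinched disk whose pinch points are $x=\{x_1,\dots,x_m\}$. Then $F=F_+\tilde{*}F_-$ is a twisted plumbing along $U$ with defect $m$; $Q$ cut along $U\cap Q$ is the twisted plumbing cap $V$, and $U$ (identified with $U\cap Q$) is its shadow; $\partial U\cap L$ means the points of $L$ on the boundary of the pinched disk $U\cap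 Q$. *)

theory Defs
  imports "HOL-Analysis.Analysis"
begin

text \<open>The plumbing sphere Q minus a point outside U is identified with the plane.\<close>

definition pinched_disk :: "(real^2) set \<Rightarrow> (real^2) set \<Rightarrow> bool" where
  "pinched_disk P X \<longleftrightarrow>
     compact P \<and> connected P \<and> simply_connected P \<and> finite X \<and> X \<subseteq> P \<and>
     finite (components (P - X)) \<and>
     (\<forall>c\<in>components (P - X).
         closure c homeomorphic cball (0::real^2) 1 \<and> closure c \<inter> X \<subseteq> frontier (closure c)) \<and>
     (\<forall>c\<in>components (P - X). \<forall>d\<in>components (P - X).
         c \<noteq> d \<longrightarrow> closure c \<inter> closure d \<subseteq> X) \<and>
     (\<forall>x\<in>X. card {c\<in>components (P - X). x \<in> closure c} = 2)"

end

theory Submission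
  imports Defs
begin

text \<open>The closures of the components of P - X are closed disks glued at the pinch points, so P is
  an ANR, hence locally path connected; being simply connected, it is unicoherent. Consequently,
  whenever the pieces are split into two families with connected unions, these unions meet in at
  most one point: the pieces and the pinch points form a tree, and there are at least m + 1 pieces.
  Each pinch point lies on exactly two pieces, so the numbers k of pinch points on the pieces add
  up to 2m, while the hypotheses on a piece with k \<ge> 1 pinch points and l points of L on its
  boundary give k + l \<ge> 4. Summing over the pieces, 4(m + 1) \<le> |L \<inter> P| + 2m.\<close>

section \<open>Connected unions of closed pieces\<close>

lemma Union_components_Diff:
  assumes "C \<in> components S"
  shows "\<Union>(components S - {C}) = S - C"
proof -
  have "C' \<inter> C = {}" if "C' \<in> components S - {C}" for C'
    using components_nonoverlap[OF _ assms] that by blast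
  moreover have "S = C \<union> \<Union>(components S - {C})"
    using assms Union_components[of S] by blast
  ultimately show ?thesis
    by blast
qed

lemma exists_component_disjoint:
  assumes "\<not> connected Y" "T \<subseteq> Y" "T \<noteq> {}" "connected T"
  obtains S where "S \<in> components Y" "S \<inter> T = {}"
proof -
  obtain ST where ST: "ST \<in> components Y" "T \<subseteq> ST"
    using exists_component_superset assms(2-4) by blast
  have "components Y \<noteq> {ST}"
  proof
    assume "components Y = {ST}"
    then have "Y = ST"
      using Union_components[of Y] by simp
    then show False
      using assms(1) ST(1) in_components_connected by blast
  qed
  then obtain S where "S \<in> components Y" "S \<noteq> ST"
    using ST(1) by blast
  then show ?thesis
    using that components_nonoverlap[OF _ ST(1)] ST(2) by blast
qed

lemma component_Union_pieces:
  assumes "\<And>c. c \<in> I \<Longrightarrow> connected (D c)" and S: "S \<in> components (\<Union>(D ` I))"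
  shows "S = \<Union>(D ` {c\<in>I. D c \<subseteq> S})" and "\<Union>(D ` I) - S = \<Union>(D ` {c\<in>I. \<not> D c \<subseteq> S})"
proof -
  have "D c \<subseteq> S \<or> D c \<inter> S = {}" if "c \<in> I" for c
    using components_maximal[OF S] assms(1) that by blast
  moreover have "S \<subseteq> \<Union>(D ` I)"
    using S in_components_subset by blast
  ultimately show "S = \<Union>(D ` {c\<in>I. D c \<subseteq> S})" and "\<Union>(D ` I) - S = \<Union>(D ` {c\<in>I. \<not> D c \<subseteq> S})"
    by blast+
qed

lemma component_meets_attached_set:
  assumes "finite I" and pieces: "\<And>c. c \<in> I \<Longrightarrow> closed (D c) \<and> connected (D c)"
    and "closed A" "A \<noteq> {}" "connected (A \<union> \<Union>(D ` I))"
    and S: "S \<in> components (\<Union>(D ` I))"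
  shows "A \<inter> S \<noteq> {}"
proof -
  define R where "R = A \<union> \<Union>(D ` {c\<in>I. \<not> D c \<subseteq> S})"
  note S_eq = component_Union_pieces[of I D S, OF _ S]
  have "S \<inter> R \<noteq> {}"
  proof (rule connected_as_closed_union)
    have "\<Union>(D ` I) = S \<union> \<Union>(D ` {c\<in>I. \<not> D c \<subseteq> S})"
      using S_eq(2) in_components_subset[OF S] by blast
    then show "A \<union> \<Union>(D ` I) = S \<union> R"
      unfolding R_def by blast
    show "closed S"
      using closed_components[OF _ S] pieces \<open>finite I\<close> by blast
    show "closed R"
      unfolding R_def using pieces \<open>finite I\<close> \<open>closed A\<close> by (intro closed_Un closed_Union) auto
  qed (use assms in_components_nonempty R_def in auto)
  then show ?thesis
    using S_eq pieces unfolding R_def by blast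
qed

lemma connected_Union_Diff_within_component:
  assumes pieces: "\<And>c. c \<in> V \<Longrightarrow> connected (D c)" and "w \<in> V"
    and S: "S \<in> components (\<Union>(D ` (V - {w})))"
    and meets_w: "\<And>T. T \<in> components (\<Union>(D ` (V - {w}))) \<Longrightarrow> D w \<inter> T \<noteq> {}"
    and z: "z \<in> V - {w}" "D z \<subseteq> S"
    and conn: "connected (\<Union>(D ` (insert w {c \<in> V - {w}. D c \<subseteq> S} - {z})))"
  shows "connected (\<Union>(D ` (V - {z})))"
proof -
  define K where "K = {c \<in> V - {w}. D c \<subseteq> S}"
  define Y where "Y = \<Union>(D ` (V - {w}))"
  have "Y - S = \<Union>(D ` (V - {w} - K))"
    using component_Union_pieces(2)[of "V - {w}" D S] pieces S unfolding K_def Y_def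
    by (auto simp: set_diff_eq)
  moreover have "\<Union>(components Y - {S}) = Y - S"
    using S unfolding Y_def by (rule Union_components_Diff)
  moreover have "V - {z} = (insert w K - {z}) \<union> (V - {w} - K)"
    using z \<open>w \<in> V\<close> unfolding K_def by blast
  ultimately have "\<Union>(D ` (V - {z})) = \<Union>(D ` (insert w K - {z})) \<union> \<Union>(components Y - {S})"
    by auto
  moreover have "connected (\<Union>(D ` (insert w K - {z})) \<union> \<Union>(components Y - {S}))"
  proof (rule connected_Un_UN)
    show "connected (\<Union>(D ` (insert w K - {z})))"
      using conn unfolding K_def .
    fix T assume T: "T \<in> components Y - {S}"
    then show "connected T"
      using in_components_connected by blast
    have "D w \<subseteq> \<Union>(D ` (insert w K - {z}))"
      using z(1) by blast
    then show "\<Union>(D ` (insert w K - {z})) \<inter> T \<noteq> {}"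
      using meets_w[of T] T unfolding Y_def by blast
  qed
  ultimately show ?thesis
    by simp
qed

lemma exists_nonseparating_member:
  assumes "finite V" and pieces: "\<And>c. c \<in> V \<Longrightarrow> closed (D c) \<and> connected (D c) \<and> D c \<noteq> {}"
    and "connected (\<Union>(D ` V))" "u \<in> V" "V \<noteq> {u}"
  shows "\<exists>z\<in>V - {u}. connected (\<Union>(D ` (V - {z})))"
  using assms
proof (induction "card V" arbitrary: V u rule: less_induct)
  case less
  then obtain w where w: "w \<in> V" "w \<noteq> u"
    by blast
  define Y where "Y = \<Union>(D ` (V - {w}))"
  show ?case
  proof (cases "connected Y")
    case True
    then show ?thesis
      using w unfolding Y_def by blast
  next
    case False
    txt \<open>Recurse into w together with a component of the rest avoiding u; since every other
      component hangs on w, a member z \<noteq> w that does not separate the smaller family does not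
      separate V either.\<close>
    have "D u \<subseteq> Y" "D u \<noteq> {}" "connected (D u)"
      using less.prems(2,4) w unfolding Y_def by auto
    then obtain S where S: "S \<in> components Y" "S \<inter> D u = {}"
      using exists_component_disjoint[OF False] by metis
    define K where "K = {c \<in> V - {w}. D c \<subseteq> S}"
    have "D w \<union> Y = \<Union>(D ` V)"
      using w(1) unfolding Y_def by blast
    then have meets_w: "D w \<inter> T \<noteq> {}" if "T \<in> components Y" for T
      using component_meets_attached_set[of "V - {w}" D "D w" T] less.prems(1,2,3) w(1) that
      unfolding Y_def by auto
    have "u \<notin> K"
      using S(2) less.prems(2,4) unfolding K_def by blast
    have "S = \<Union>(D ` K)"
      using component_Union_pieces(1)[of "V - {w}" D S] less.prems(2) S(1)
      unfolding K_def Y_def by auto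
    then have "connected (\<Union>(D ` insert w K))" "K \<noteq> {}"
      using meets_w[OF S(1)] S(1) connected_Un[of "D w" S] less.prems(2) w(1)
      by (auto simp: in_components_connected dest: in_components_nonempty)
    moreover have "card (insert w K) < card V"
      using \<open>u \<notin> K\<close> less.prems(1,4) w unfolding K_def by (intro psubset_card_mono) auto
    moreover have "finite (insert w K)" "insert w K \<noteq> {w}"
      using less.prems(1) \<open>K \<noteq> {}\<close> unfolding K_def by auto
    moreover have "\<And>c. c \<in> insert w K \<Longrightarrow> closed (D c) \<and> connected (D c) \<and> D c \<noteq> {}"
      using less.prems(2) w(1) unfolding K_def by blast
    ultimately obtain z where z: "z \<in> K" "connected (\<Union>(D ` (insert w K - {z})))"
      using less.hyps[of "insert w K" w] by blast
    have "connected (\<Union>(D ` (V - {z})))"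
      using connected_Union_Diff_within_component[of V D w S z] less.prems(2) w(1) S(1) meets_w z
      unfolding Y_def K_def by auto
    moreover have "z \<noteq> u"
      using z(1) \<open>u \<notin> K\<close> by blast
    ultimately show ?thesis
      using z(1) unfolding K_def by blast
  qed
qed

section \<open>Families of pieces glued along a tree\<close>

definition shared_points :: "('i \<Rightarrow> 'a set) \<Rightarrow> 'i set \<Rightarrow> 'a set" where
  "shared_points D V = {x. \<exists>c\<in>V. \<exists>d\<in>V. c \<noteq> d \<and> x \<in> D c \<and> x \<in> D d}"

lemma shared_pointsI:
  "c \<in> V \<Longrightarrow> d \<in> V \<Longrightarrow> c \<noteq> d \<Longrightarrow> x \<in> D c \<Longrightarrow> x \<in> D d \<Longrightarrow> x \<in> shared_points D V"
  unfolding shared_points_def by blast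

lemma shared_points_mono: "V \<subseteq> W \<Longrightarrow> shared_points D V \<subseteq> shared_points D W"
  unfolding shared_points_def by blast

lemma Union_Int_Union_subset_shared_points:
  assumes "K \<subseteq> V"
  shows "\<Union>(D ` K) \<inter> \<Union>(D ` (V - K)) \<subseteq> shared_points D V"
proof
  fix x assume "x \<in> \<Union>(D ` K) \<inter> \<Union>(D ` (V - K))"
  then obtain c d where "c \<in> K" "d \<in> V - K" "x \<in> D c" "x \<in> D d"
    by blast
  then show "x \<in> shared_points D V"
    using assms by (auto intro: shared_pointsI)
qed

lemma shared_points_subset_insert:
  "shared_points D V \<subseteq> shared_points D (V - {z}) \<union> (D z \<inter> \<Union>(D ` (V - {z})))"
  unfolding shared_points_def by blast

definition tree_like :: "('i \<Rightarrow> 'a::topological_space set) \<Rightarrow> 'i set \<Rightarrow> bool" where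
  "tree_like D V \<longleftrightarrow>
     (\<forall>K\<subseteq>V. K \<noteq> {} \<longrightarrow> K \<noteq> V \<longrightarrow> connected (\<Union>(D ` K)) \<longrightarrow> connected (\<Union>(D ` (V - K))) \<longrightarrow>
        (\<exists>a. \<Union>(D ` K) \<inter> \<Union>(D ` (V - K)) \<subseteq> {a}))"

lemma tree_likeD:
  assumes "tree_like D V" "K \<subseteq> V" "K \<noteq> {}" "K \<noteq> V"
    "connected (\<Union>(D ` K))" "connected (\<Union>(D ` (V - K)))"
  obtains a where "\<Union>(D ` K) \<inter> \<Union>(D ` (V - K)) \<subseteq> {a}"
  using assms unfolding tree_like_def by blast

lemma tree_like_Diff_singleton:
  assumes tree: "tree_like D V" and "z \<in> V" "connected (D z)"
    and "d \<in> V - {z}" "D z \<inter> D d \<noteq> {}"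
  shows "tree_like D (V - {z})"
  unfolding tree_like_def
proof (intro allI impI)
  fix K assume K: "K \<subseteq> V - {z}" "K \<noteq> {}" "K \<noteq> V - {z}"
    and conn: "connected (\<Union>(D ` K))" "connected (\<Union>(D ` (V - {z} - K)))"
  show "\<exists>a. \<Union>(D ` K) \<inter> \<Union>(D ` (V - {z} - K)) \<subseteq> {a}"
  proof (cases "d \<in> K")
    case True
    have "connected (D z \<union> \<Union>(D ` K))"
      using True assms(3,5) conn(1) by (intro connected_Un) auto
    moreover have "V - insert z K = V - {z} - K"
      by blast
    ultimately obtain a where "\<Union>(D ` insert z K) \<inter> \<Union>(D ` (V - insert z K)) \<subseteq> {a}"
      using tree_likeD[OF tree, of "insert z K"] K conn(2) \<open>z \<in> V\<close> by auto
    then show ?thesis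
      using \<open>V - insert z K = V - {z} - K\<close> by auto
  next
    case False
    have "connected (D z \<union> \<Union>(D ` (V - {z} - K)))"
      using False assms(3,4,5) conn(2) by (intro connected_Un) auto
    moreover have "V - K = insert z (V - {z} - K)"
      using K \<open>z \<in> V\<close> by blast
    ultimately obtain a where "\<Union>(D ` K) \<inter> \<Union>(D ` (V - K)) \<subseteq> {a}"
      using tree_likeD[OF tree, of K] K conn(1) by auto
    then show ?thesis
      by blast
  qed
qed

lemma card_shared_points_less:
  assumes "finite V" "V \<noteq> {}"
    and pieces: "\<And>c. c \<in> V \<Longrightarrow> closed (D c) \<and> connected (D c) \<and> D c \<noteq> {}"
    and "connected (\<Union>(D ` V))" "tree_like D V" "finite (shared_points D V)"
  shows "card (shared_points D V) < card V"
  using assms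
proof (induction V rule: finite_psubset_induct)
  case (psubset V)
  obtain u where u: "u \<in> V"
    using psubset.prems(1) by blast
  show ?case
  proof (cases "V = {u}")
    case True
    then show ?thesis
      by (simp add: shared_points_def)
  next
    case False
    then obtain z where z: "z \<in> V" "connected (\<Union>(D ` (V - {z})))"
      using exists_nonseparating_member[OF psubset.hyps(1) psubset.prems(2,3) u] by blast
    have V_eq: "\<Union>(D ` V) = D z \<union> \<Union>(D ` (V - {z}))"
      using z(1) by blast
    have "V - {z} \<noteq> {}"
      using False u z(1) by blast
    then have "D z \<inter> \<Union>(D ` (V - {z})) \<noteq> {}"
      using psubset.hyps(1) psubset.prems(2) z(1)
      by (intro connected_as_closed_union[OF psubset.prems(3) V_eq]) (auto intro: closed_Union)
    then obtain d where "d \<in> V - {z}" "D z \<inter> D d \<noteq> {}"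
      by blast
    then have "tree_like D (V - {z})"
      using tree_like_Diff_singleton[OF psubset.prems(4) z(1)] psubset.prems(2) z(1) by blast
    moreover have fin: "finite (shared_points D (V - {z}))"
      using shared_points_mono[of "V - {z}" V D] psubset.prems(5) by (auto intro: finite_subset)
    ultimately have IH: "card (shared_points D (V - {z})) < card (V - {z})"
      using psubset.IH[of "V - {z}"] psubset.hyps(1) psubset.prems(2) z \<open>V - {z} \<noteq> {}\<close> by auto
    have "{z} \<noteq> V"
      using \<open>V - {z} \<noteq> {}\<close> by blast
    then obtain a where "D z \<inter> \<Union>(D ` (V - {z})) \<subseteq> {a}"
      using tree_likeD[OF psubset.prems(4), of "{z}"] z psubset.prems(2) by auto
    then have "shared_points D V \<subseteq> insert a (shared_points D (V - {z}))"
      using shared_points_subset_insert[of D V z] by blast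
    then have "card (shared_points D V) \<le> card (insert a (shared_points D (V - {z})))"
      using fin by (intro card_mono) auto
    also have "\<dots> \<le> Suc (card (shared_points D (V - {z})))"
      using fin by (simp add: card_insert_if)
    finally show ?thesis
      using IH z(1) psubset.hyps(1) by (simp add: card_Diff_singleton)
  qed
qed

lemma unicoherent_imp_tree_like:
  fixes D :: "'i \<Rightarrow> 'a::metric_space set"
  assumes "unicoherent (\<Union>(D ` V))" "finite V" "\<And>c. c \<in> V \<Longrightarrow> closed (D c)"
    and "finite (shared_points D V)"
  shows "tree_like D V"
  unfolding tree_like_def
proof (intro allI impI)
  fix K assume K: "K \<subseteq> V" and conn: "connected (\<Union>(D ` K))" "connected (\<Union>(D ` (V - K)))"
  have closed_Union_pieces: "closed (\<Union>(D ` J))" if "J \<subseteq> V" for J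
    using that assms(2,3) by (intro closed_Union) (auto intro: finite_subset)
  have "connected (\<Union>(D ` K) \<inter> \<Union>(D ` (V - K)))" (is "connected ?S")
  proof (rule unicoherentD[OF assms(1) conn])
    show "\<Union>(D ` V) = \<Union>(D ` K) \<union> \<Union>(D ` (V - K))"
      using K by blast
    then show "closedin (top_of_set (\<Union>(D ` V))) (\<Union>(D ` K))"
      "closedin (top_of_set (\<Union>(D ` V))) (\<Union>(D ` (V - K)))"
      using K closed_Union_pieces by (auto intro!: closed_subset)
  qed
  moreover have "finite ?S"
    using Union_Int_Union_subset_shared_points[OF K] assms(4) by (rule finite_subset)
  ultimately have "?S = {} \<or> (\<exists>a. ?S = {a})"
    by (simp add: connected_finite_iff_sing)
  then show "\<exists>a. ?S \<subseteq> {a}"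
    by blast
qed

lemma ANR_Union_finite_shared_points:
  fixes D :: "'i \<Rightarrow> 'a::euclidean_space set"
  assumes "finite V" "\<And>c. c \<in> V \<Longrightarrow> closed (D c) \<and> ANR (D c)"
    and "finite (shared_points D V)"
  shows "ANR (\<Union>(D ` V))"
  using assms
proof (induction V rule: finite_induct)
  case empty
  then show ?case
    by simp
next
  case (insert a V)
  have "D a \<inter> \<Union>(D ` V) \<subseteq> shared_points D (insert a V)"
    using insert.hyps(2) by (auto intro: shared_pointsI)
  then have "ANR (D a \<inter> \<Union>(D ` V))"
    using insert.prems(2) by (auto intro: finite_imp_ANR finite_subset)
  moreover have "ANR (\<Union>(D ` V))"
    using insert shared_points_mono[of V "insert a V" D] by (auto intro: finite_subset)
  ultimately show ?case
    using insert by (auto intro!: ANR_closed_Un closed_Union)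
qed

lemma shared_points_meets_piece:
  assumes "finite V" and pieces: "\<And>c. c \<in> V \<Longrightarrow> closed (D c) \<and> D c \<noteq> {}"
    and "connected (\<Union>(D ` V))" "c \<in> V" "V \<noteq> {c}"
  shows "D c \<inter> shared_points D V \<noteq> {}"
proof -
  have "D c \<inter> \<Union>(D ` (V - {c})) \<noteq> {}"
  proof (rule connected_as_closed_union[OF assms(3)])
    show "\<Union>(D ` V) = D c \<union> \<Union>(D ` (V - {c}))"
      using \<open>c \<in> V\<close> by blast
    show "\<Union>(D ` (V - {c})) \<noteq> {}"
      using assms(4,5) pieces by blast
  qed (use assms in \<open>auto intro: closed_Union\<close>)
  then show ?thesis
    using \<open>c \<in> V\<close> by (auto intro: shared_pointsI)
qed

lemma sum_card_Int_eq_sum_card_members: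
  assumes "finite V" "finite X"
  shows "(\<Sum>c\<in>V. card (X \<inter> D c)) = (\<Sum>x\<in>X. card {c\<in>V. x \<in> D c})"
proof -
  have "(\<Sum>c\<in>V. card (X \<inter> D c)) = (\<Sum>c\<in>V. \<Sum>x\<in>X. if x \<in> D c then 1 else 0)"
    using assms(2) by (simp add: Int_def sum.If_cases)
  also have "\<dots> = (\<Sum>x\<in>X. \<Sum>c\<in>V. if x \<in> D c then 1 else 0)"
    by (rule sum.swap)
  also have "\<dots> = (\<Sum>x\<in>X. card {c\<in>V. x \<in> D c})"
    using assms(1) by (simp add: sum.If_cases Int_def)
  finally show ?thesis .
qed

lemma sum_card_Int_eq_card_Int_Union:
  assumes "finite V" "finite L" "L \<inter> shared_points D V = {}"
  shows "(\<Sum>c\<in>V. card (L \<inter> D c)) = card (L \<inter> \<Union>(D ` V))"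
proof -
  have "(\<Sum>c\<in>V. card (L \<inter> D c)) = card (\<Union>c\<in>V. L \<inter> D c)"
  proof (rule card_UN_disjoint[symmetric])
    show "\<forall>c\<in>V. \<forall>d\<in>V. c \<noteq> d \<longrightarrow> L \<inter> D c \<inter> (L \<inter> D d) = {}"
      using assms(3) by (auto intro: shared_pointsI)
  qed (use assms in auto)
  also have "(\<Union>c\<in>V. L \<inter> D c) = L \<inter> \<Union>(D ` V)"
    by blast
  finally show ?thesis .
qed

section \<open>Pinched disks\<close>

lemma pinched_disk_pieces:
  assumes "pinched_disk P X" "c \<in> components (P - X)"
  shows "closed (closure c)" "connected (closure c)" "closure c \<noteq> {}" "closure c \<subseteq> P"
proof -
  have "compact P"
    using assms(1) unfolding pinched_disk_def by blast
  moreover have "c \<subseteq> P"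
    using in_components_subset[OF assms(2)] by blast
  ultimately show "closure c \<subseteq> P"
    by (simp add: closure_minimal compact_imp_closed)
  show "closed (closure c)" "connected (closure c)" "closure c \<noteq> {}"
    using assms(2) by (auto intro: connected_imp_connected_closure in_components_connected
        dest: in_components_nonempty)
qed

lemma pinched_disk_shared_points:
  assumes "pinched_disk P X"
  shows "shared_points closure (components (P - X)) = X"
proof
  show "shared_points closure (components (P - X)) \<subseteq> X"
  proof
    fix x assume "x \<in> shared_points closure (components (P - X))"
    then obtain c d where "c \<in> components (P - X)" "d \<in> components (P - X)" "c \<noteq> d"
        "x \<in> closure c" "x \<in> closure d"
      unfolding shared_points_def by blast
    then show "x \<in> X"
      using assms unfolding pinched_disk_def by blast
  qed
  show "X \<subseteq> shared_points closure (components (P - X))"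
  proof
    fix x assume "x \<in> X"
    then have "card {c \<in> components (P - X). x \<in> closure c} = 2"
      using assms unfolding pinched_disk_def by blast
    then show "x \<in> shared_points closure (components (P - X))"
      unfolding card_2_iff' shared_points_def by blast
  qed
qed

lemma pinched_disk_Union_closure_components:
  assumes "pinched_disk P X"
  shows "\<Union>(closure ` components (P - X)) = P"
proof
  show "\<Union>(closure ` components (P - X)) \<subseteq> P"
    using pinched_disk_pieces(4)[OF assms] by blast
  show "P \<subseteq> \<Union>(closure ` components (P - X))"
  proof
    fix y assume "y \<in> P"
    show "y \<in> \<Union>(closure ` components (P - X))"
    proof (cases "y \<in> X")
      case True
      then show ?thesis
        using pinched_disk_shared_points[OF assms] unfolding shared_points_def by blast
    next
      case False
      then have "y \<in> \<Union>(components (P - X))"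
        using \<open>y \<in> P\<close> by simp
      then show ?thesis
        using closure_subset by blast
    qed
  qed
qed

lemma pinched_disk_unicoherent:
  assumes "pinched_disk P X"
  shows "unicoherent P"
proof -
  have "finite (components (P - X))" "finite X" "simply_connected P"
    using assms unfolding pinched_disk_def by blast+
  have "ANR (closure c)" if "c \<in> components (P - X)" for c
  proof (rule ANR_homeomorphic_ANR)
    show "closure c homeomorphic cball (0::real^2) 1"
      using assms that unfolding pinched_disk_def by blast
  qed (simp add: convex_imp_ANR)
  then have "ANR P"
    using ANR_Union_finite_shared_points[of "components (P - X)" closure]
      \<open>finite (components (P - X))\<close> \<open>finite X\<close>
      pinched_disk_shared_points[OF assms] pinched_disk_Union_closure_components[OF assms] by simp
  then have "locally path_connected P"
    by (rule ANR_imp_locally_path_connected)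
  then show ?thesis
    using \<open>simply_connected P\<close> by (intro Borsukian_imp_unicoherent simply_connected_imp_Borsukian)
qed

lemma pinched_disk_card_components:
  assumes "pinched_disk P X" "P \<noteq> {}"
  shows "card X < card (components (P - X))"
proof -
  note shared = pinched_disk_shared_points[OF assms(1)]
    and Union = pinched_disk_Union_closure_components[OF assms(1)]
    and pieces = pinched_disk_pieces[OF assms(1)]
  have "finite (components (P - X))" "finite X" "connected P"
    using assms(1) unfolding pinched_disk_def by blast+
  moreover have "tree_like closure (components (P - X))"
    using pinched_disk_unicoherent[OF assms(1)] \<open>finite (components (P - X))\<close> \<open>finite X\<close>
      shared Union by (intro unicoherent_imp_tree_like) auto
  moreover have "components (P - X) \<noteq> {}"
  proof
    assume empty: "components (P - X) = {}"
    show False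
      using Union assms(2) unfolding empty by simp
  qed
  ultimately show ?thesis
    using card_shared_points_less[of "components (P - X)" closure] pieces shared Union by auto
qed

lemma pinched_disk_degree_sum:
  assumes "pinched_disk P X"
  shows "(\<Sum>c\<in>components (P - X). card (X \<inter> closure c)) = 2 * card X"
  using assms sum_card_Int_eq_sum_card_members[of "components (P - X)" X closure]
  unfolding pinched_disk_def by simp

lemma pinched_disk_pinch_point_on_piece:
  assumes "pinched_disk P X" "X \<noteq> {}" "c \<in> components (P - X)"
  shows "X \<inter> closure c \<noteq> {}"
proof -
  note shared = pinched_disk_shared_points[OF assms(1)]
  obtain x where "x \<in> shared_points closure (components (P - X))"
    using assms(2) shared by blast
  then obtain c1 c2 where "c1 \<in> components (P - X)" "c2 \<in> components (P - X)" "c1 \<noteq> c2"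
    unfolding shared_points_def by blast
  then have "components (P - X) \<noteq> {c}"
    by blast
  moreover have "finite (components (P - X))" "connected P"
    using assms(1) unfolding pinched_disk_def by blast+
  ultimately show ?thesis
    using shared_points_meets_piece[of "components (P - X)" closure c]
      pinched_disk_pieces[OF assms(1)] pinched_disk_Union_closure_components[OF assms(1)]
      shared assms(3) by auto
qed

lemma pinched_disk_sum_card_frontier_le:
  assumes "pinched_disk P X" "finite L" "L \<inter> X = {}"
  shows "(\<Sum>c\<in>components (P - X). card (L \<inter> frontier (closure c))) \<le> card (L \<inter> P)"
proof -
  have "finite (components (P - X))"
    using assms(1) unfolding pinched_disk_def by blast
  have "(\<Sum>c\<in>components (P - X). card (L \<inter> frontier (closure c)))
      \<le> (\<Sum>c\<in>components (P - X). card (L \<inter> closure c))"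
    using assms(2) frontier_subset_closed[OF closed_closure]
    by (intro sum_mono card_mono) auto
  also have "\<dots> = card (L \<inter> P)"
    using sum_card_Int_eq_card_Int_Union[of "components (P - X)" L closure]
      \<open>finite (components (P - X))\<close> assms(2,3)
      pinched_disk_shared_points[OF assms(1)] pinched_disk_Union_closure_components[OF assms(1)]
    by simp
  finally show ?thesis .
qed

lemma four_le_add_if_same_parity:
  fixes k l :: nat
  assumes "l mod 2 = k mod 2" "k \<ge> 1" "k = 1 \<longrightarrow> l \<ge> 3" "k = 2 \<longrightarrow> l \<ge> 2"
  shows "4 \<le> l + k"
  using assms by presburger

theorem proposition7p1:
  fixes P X L :: "(real^2) set" and m :: nat
  assumes "pinched_disk P X"
    and "card X = m" and "m \<ge> 1"
    and "finite L"
    and "L \<inter> P \<subseteq> frontier P - X"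
    and "\<forall>U0\<in>components (P - X).
           card (L \<inter> frontier (closure U0)) mod 2 = card (X \<inter> closure U0) mod 2 \<and>
           (card (X \<inter> closure U0) = 1 \<longrightarrow> card (L \<inter> frontier (closure U0)) \<ge> 3) \<and>
           (card (X \<inter> closure U0) = 2 \<longrightarrow> card (L \<inter> frontier (closure U0)) \<ge> 2)"
  shows "card (L \<inter> P) \<ge> 2 * m + 4"
proof -
  define C where "C = components (P - X)"
  define l where "l c = card (L \<inter> frontier (closure c))" for c
  define deg where "deg c = card (X \<inter> closure c)" for c
  have "finite X" "X \<subseteq> P" "X \<noteq> {}"
    using assms(1-3) unfolding pinched_disk_def by auto
  then have "L \<inter> X = {}"
    using assms(5) by blast
  have "deg c \<ge> 1" if "c \<in> C" for c
    using pinched_disk_pinch_point_on_piece[OF assms(1) \<open>X \<noteq> {}\<close>] that \<open>finite X\<close>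
    unfolding C_def deg_def by (simp add: Suc_le_eq card_gt_0_iff)
  then have "(\<Sum>c\<in>C. 4) \<le> (\<Sum>c\<in>C. l c + deg c)"
    using assms(6) four_le_add_if_same_parity unfolding C_def l_def deg_def by (intro sum_mono) auto
  also have "\<dots> \<le> card (L \<inter> P) + 2 * m"
    using pinched_disk_sum_card_frontier_le[OF assms(1,4) \<open>L \<inter> X = {}\<close>]
      pinched_disk_degree_sum[OF assms(1)] assms(2)
    unfolding C_def l_def deg_def by (simp add: sum.distrib)
  finally show ?thesis
    using pinched_disk_card_components[OF assms(1)] \<open>X \<subseteq> P\<close> \<open>X \<noteq> {}\<close> assms(2)
    unfolding C_def by fastforce
qed

end
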